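(* Let $q$ be a real-valued function on $[0,\infty)$ which extends to a function $q(\xi)$ analytic (regular) in the sector $S=\{\xi\in\mathbb{C}:\ \xi\neq 0,\ -\theta_0<\arg\xi<\theta_0\}$, for some $\theta_0$ with $0<\theta_0<\pi$, and suppose there are constants $\gamma>1$ and $k$ such that $|q(\xi)|\le k|\xi|^{-\gamma}$ as $|\xi|\to\infty$ with $\xi\in S$. For $\operatorname{Im} z>0$ and $t\in S$ put $Q(t)=\frac{1}{2}\,i\,q(t)/z$ and $K(s,z)=\begin{pmatrix}1&1\\ -e^{2isz}&-e^{2isz}\end{pmatrix}$. Define vector functions $W_n(\xi,z)=(u_n(\xi,z),v_n(\xi,z))^T$ for $\xi\in S$ and $\operatorname{Im} z>0$ by $W_0(\xi,z)=e_1=(1,0)^T$ and $$W_n(\xi,z)=\int_0^\infty Q(\xi+s)\,K(s,z)\,W_{n-1}(\xi+s,z)\,ds\qquad(n\ge 1).$$ Then, writing $|W_n|=|u_n|+|v_n|$, for all $\xi\in S$, $\operatorname{Im} z>0$ and $n\ge 0$, $$|W_n(\xi,z)|\le \frac{1}{n!}\left(2\int_0^\infty |Q(\xi+s)|\,ds\right)^n,$$ and $W_n(\xi,z)$ is a regular (analytic) function of $\xi$ in $S$.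
   Context: Here $\xi+s$ with $s\ge0$ lies in $S$ whenever $\xi\in S$. The quantity $Q$ depends on $z$ through the factor $1/z$. *)

theory Defs
  imports "HOL-Analysis.Analysis"
begin

definition sector :: "real \<Rightarrow> complex set" where
  "sector \<theta>0 = {\<xi>. \<xi> \<noteq> 0 \<and> - \<theta>0 < Arg \<xi> \<and> Arg \<xi> < \<theta>0}"

definition Qf :: "(complex \<Rightarrow> complex) \<Rightarrow> complex \<Rightarrow> complex \<Rightarrow> complex" where
  "Qf q z t = (1/2) * \<i> * q t / z"

definition Kmul :: "real \<Rightarrow> complex \<Rightarrow> complex \<times> complex \<Rightarrow> complex \<times> complex" where
  "Kmul s z w = (1 * fst w + 1 * snd w,
                 (- exp (2 * \<i> * of_real s * z)) * fst w + (- exp (2 * \<i> * of_real s * z)) * snd w)"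

fun W :: "(complex \<Rightarrow> complex) \<Rightarrow> complex \<Rightarrow> nat \<Rightarrow> complex \<Rightarrow> complex \<times> complex" where
  "W q z 0 \<xi> = (1, 0)"
| "W q z (Suc n) \<xi> =
     ((LINT s:{0..}|lborel. Qf q z (\<xi> + of_real s) * fst (Kmul s z (W q z n (\<xi> + of_real s)))),
      (LINT s:{0..}|lborel. Qf q z (\<xi> + of_real s) * snd (Kmul s z (W q z n (\<xi> + of_real s)))))"

end

theory Submission
  imports Defs "HOL-Complex_Analysis.Complex_Analysis"
begin

text \<open>
  The kernel acts along the rays \<open>\<xi> + s\<close>, \<open>s \<ge> 0\<close>, which stay inside the sector. Put
  \<open>P(\<xi>) = \<integral>\<^sub>0\<^sup>\<infinity> |Q(\<xi> + s)| ds\<close>. Since \<open>|exp (2 i s z)| \<le> 1\<close> for \<open>Im z > 0\<close>, each component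
  of \<open>W (n + 1) \<xi>\<close> is bounded by \<open>\<integral>\<^sub>0\<^sup>\<infinity> |Q(\<xi> + s)| |W n (\<xi> + s)| ds\<close>. As \<open>s \<mapsto> P(\<xi> + s)\<close>
  is a tail integral with derivative \<open>-|Q(\<xi> + s)|\<close>, the induction hypothesis gives
  \<open>|W (n + 1) \<xi>| \<le> 2 \<integral>\<^sub>0\<^sup>\<infinity> |Q(\<xi> + s)| (2 P(\<xi> + s))^n / n! ds = (2 P(\<xi>))^(n + 1) / (n + 1)!\<close>.

  For holomorphy, the decay \<open>|q(\<xi>)| \<le> k |\<xi>| powr -\<gamma>\<close> with \<open>\<gamma> > 1\<close> yields, for all \<open>\<xi>\<close>
  near a point of the sector, one integrable majorant of \<open>s \<mapsto> Q(\<xi> + s)\<close>. The integrals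
  over \<open>[0, b]\<close> are holomorphic by differentiation under the integral sign, and they
  converge locally uniformly as \<open>b \<rightarrow> \<infinity>\<close>.
\<close>

section \<open>Geometry of the sector\<close>

lemma divide_sqrt_add_square_mono:
  fixes x y b :: real
  assumes "x \<le> y"
  shows "x / sqrt (x\<^sup>2 + b\<^sup>2) \<le> y / sqrt (y\<^sup>2 + b\<^sup>2)"
proof -
  have nonneg: "u / sqrt (u\<^sup>2 + b\<^sup>2) \<le> v / sqrt (v\<^sup>2 + b\<^sup>2)" if "0 \<le> u" "u \<le> v" for u v
  proof (cases "u = 0")
    case False
    have "u\<^sup>2 * (v\<^sup>2 + b\<^sup>2) \<le> v\<^sup>2 * (u\<^sup>2 + b\<^sup>2)"
      using that by (simp add: algebra_simps mult_left_mono power_mono)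
    then have "sqrt (u\<^sup>2 * (v\<^sup>2 + b\<^sup>2)) \<le> sqrt (v\<^sup>2 * (u\<^sup>2 + b\<^sup>2))"
      by (rule real_sqrt_le_mono)
    then have "u * sqrt (v\<^sup>2 + b\<^sup>2) \<le> v * sqrt (u\<^sup>2 + b\<^sup>2)"
      using that by (simp add: real_sqrt_mult)
    moreover have "0 < sqrt (u\<^sup>2 + b\<^sup>2)" "0 < sqrt (v\<^sup>2 + b\<^sup>2)"
      using that False by (simp_all add: add_pos_nonneg)
    ultimately show ?thesis by (simp add: divide_simps)
  qed (use that in simp)
  show ?thesis
  proof (cases "0 \<le> x")
    case True
    then show ?thesis using nonneg assms by blast
  next
    case False
    show ?thesis
    proof (cases "0 \<le> y")
      case True
      then show ?thesis using False by (simp add: divide_nonpos_nonneg order_trans[of _ 0])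
    next
      case False
      then show ?thesis using nonneg[of "-y" "-x"] assms by simp
    qed
  qed
qed

lemma sector_add_of_real:
  assumes "\<theta>0 \<le> pi" "\<xi> \<in> sector \<theta>0" "0 \<le> s"
  shows "\<xi> + of_real s \<in> sector \<theta>0"
proof -
  define w where "w = \<xi> + of_real s"
  have "\<xi> \<noteq> 0" and Arg_\<xi>: "\<bar>Arg \<xi>\<bar> < \<theta>0"
    using assms(2) by (auto simp: sector_def)
  have "w \<noteq> 0"
  proof
    assume "w = 0"
    then have "\<xi> = of_real (- s)" and "s \<noteq> 0"
      using \<open>\<xi> \<noteq> 0\<close> by (auto simp: w_def add_eq_0_iff)
    then have "Arg \<xi> = pi" using assms(3) Arg_of_real[of "- s"] by simp
    with Arg_\<xi> assms(1) show False by simp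
  qed
  \<comment> \<open>\<open>w\<close> has the imaginary part of \<open>\<xi>\<close> and a larger real part, so \<open>cos (Arg w)\<close> is larger\<close>
  have "Re \<xi> / norm \<xi> \<le> Re w / norm w"
    unfolding norm_complex_def w_def by simp (rule divide_sqrt_add_square_mono, use assms(3) in simp)
  then have "cos \<bar>Arg \<xi>\<bar> \<le> cos \<bar>Arg w\<bar>"
    using \<open>\<xi> \<noteq> 0\<close> \<open>w \<noteq> 0\<close> by (simp add: cos_Arg)
  then have "\<bar>Arg w\<bar> \<le> \<bar>Arg \<xi>\<bar>"
    using mpi_less_Arg[of \<xi>] Arg_le_pi[of \<xi>] mpi_less_Arg[of w] Arg_le_pi[of w]
    by (subst (asm) cos_mono_le_eq) auto
  with Arg_\<xi> \<open>w \<noteq> 0\<close> show ?thesis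
    unfolding w_def[symmetric] sector_def by auto
qed

lemma open_sector:
  assumes "\<theta>0 \<le> pi"
  shows "open (sector \<theta>0)"
proof -
  have "sector \<theta>0 = Arg -` {-\<theta>0<..<\<theta>0} \<inter> -\<real>\<^sub>\<le>\<^sub>0"
    using assms by (auto simp: sector_def elim!: nonpos_Reals_cases)
  moreover have "open (-\<real>\<^sub>\<le>\<^sub>0 :: complex set)" by auto
  ultimately show ?thesis
    using continuous_on_Arg continuous_on_open_vimage open_greaterThanLessThan by metis
qed

section \<open>Integrals over the half-line\<close>

lemma set_integral_continuous_bound:
  fixes f :: "real \<Rightarrow> 'a::{banach, second_countable_topology}"
  assumes h: "set_integrable lborel A h" and "A \<in> sets borel" "continuous_on A f"
    and bound: "\<And>s. s \<in> A \<Longrightarrow> norm (f s) \<le> h s"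
  shows "set_integrable lborel A f" and "norm (LINT s:A|lborel. f s) \<le> (LINT s:A|lborel. h s)"
proof -
  show f: "set_integrable lborel A f"
  proof (rule set_integrable_bound[OF h])
    show "set_borel_measurable lborel A f"
      unfolding set_borel_measurable_def measurable_lborel2
      using assms(2,3) by (rule borel_measurable_continuous_on_indicator)
    show "AE s in lborel. s \<in> A \<longrightarrow> norm (f s) \<le> norm (h s)"
      using bound by (intro AE_I2) (auto intro: order_trans[OF _ abs_ge_self])
  qed
  have "norm (LINT s:A|lborel. f s) \<le> (LINT s:A|lborel. norm (f s))"
    by (rule set_integral_norm_bound[OF f])
  also have "\<dots> \<le> (LINT s:A|lborel. h s)"
    using bound by (intro set_integral_mono set_integrable_norm f h)
  finally show "norm (LINT s:A|lborel. f s) \<le> (LINT s:A|lborel. h s)" .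
qed

lemma set_integral_atLeast_shift:
  fixes f :: "real \<Rightarrow> 'a::{banach, second_countable_topology}"
  shows "(LINT t:{0..}|lborel. f (s + t)) = (LINT t:{s..}|lborel. f t)"
proof -
  have "(LINT t:{s..}|lborel. f t) = \<bar>1\<bar> *\<^sub>R (\<integral>t. indicator {s..} (s + 1 * t) *\<^sub>R f (s + 1 * t) \<partial>lborel)"
    unfolding set_lebesgue_integral_def by (rule lborel_integral_real_affine) simp
  then show ?thesis
    by (simp add: set_lebesgue_integral_def indicator_def)
qed

lemma set_integral_atLeast_shift_eq_diff:
  fixes a :: "real \<Rightarrow> real"
  assumes "set_integrable lborel {0..} a" "0 \<le> s"
  shows "(LINT t:{0..}|lborel. a (s + t)) = (LINT t:{0..}|lborel. a t) - (LBINT t=0..s. a t)"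
proof -
  have split: "{0..} = {0..<s} \<union> {s..}"
    using assms(2) by auto
  have "(LINT t:{0..}|lborel. a t) = (LINT t:{0..<s}|lborel. a t) + (LINT t:{s..}|lborel. a t)"
    unfolding split using assms
    by (intro set_integral_Un set_integrable_subset[OF assms(1)]) auto
  then show ?thesis
    using assms(2) by (simp add: set_integral_atLeast_shift interval_integral_Ico zero_ereal_def)
qed

lemma interval_integral_from_0_has_real_derivative:
  fixes a :: "real \<Rightarrow> real"
  assumes "continuous_on {0..} a" "0 \<le> x" "x \<le> b"
  shows "((\<lambda>u. LBINT t=0..u. a t) has_real_derivative a x) (at x within {0..b})"
  using interval_integral_FTC2[of 0 0 b a x] continuous_on_subset[OF assms(1)] assms(2,3)
  by (simp add: has_real_derivative_iff_has_vector_derivative subset_eq zero_ereal_def)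

lemma has_real_derivative_tail_integral:
  fixes a :: "real \<Rightarrow> real"
  assumes cont: "continuous_on {0..} a" and int: "set_integrable lborel {0..} a" and "0 < x"
  shows "((\<lambda>s. LINT t:{0..}|lborel. a (s + t)) has_real_derivative - a x) (at x)"
proof -
  have "at x within {0..x+1} = at x"
    using \<open>0 < x\<close> by (intro at_within_interior) auto
  then have "((\<lambda>u::real. LBINT t=0..u. a t) has_real_derivative a x) (at x)"
    using interval_integral_from_0_has_real_derivative[OF cont, of x "x+1"] \<open>0 < x\<close> by simp
  from DERIV_diff[OF DERIV_const this]
  have "((\<lambda>s::real. (LINT t:{0..}|lborel. a t) - (LBINT t=0..s. a t)) has_real_derivative - a x) (at x)"
    by simp
  then show ?thesis
    by (rule has_field_derivative_transform_within_open[OF _ open_greaterThan])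
      (use \<open>0 < x\<close> set_integral_atLeast_shift_eq_diff[OF int] in auto)
qed

lemma tendsto_tail_integral:
  fixes a :: "real \<Rightarrow> real"
  assumes cont: "continuous_on {0..} a" and int: "set_integrable lborel {0..} a"
  shows "((\<lambda>s. LINT t:{0..}|lborel. a (s + t)) \<longlongrightarrow> (LINT t:{0..}|lborel. a t)) (at_right 0)"
    and "((\<lambda>s. LINT t:{0..}|lborel. a (s + t)) \<longlongrightarrow> 0) at_top"
proof -
  let ?C = "LINT t:{0..}|lborel. a t"
  define I where "I = (\<lambda>u::real. LBINT t=0..u. a t)"
  have tail_eq: "\<forall>\<^sub>F s in F. ?C - I s = (LINT t:{0..}|lborel. a (s + t))"
    if "\<forall>\<^sub>F s in F. 0 \<le> s" for F
    using that by eventually_elim (simp add: I_def set_integral_atLeast_shift_eq_diff[OF int])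
  have "continuous (at 0 within {0..1}) I"
    unfolding I_def
    by (rule DERIV_continuous, rule interval_integral_from_0_has_real_derivative[OF cont]) auto
  then have "(I \<longlongrightarrow> 0) (at_right 0)"
    by (simp add: continuous_within at_within_Icc_at_right I_def zero_ereal_def)
  then have "((\<lambda>s. ?C - I s) \<longlongrightarrow> ?C) (at_right 0)"
    using tendsto_diff[OF tendsto_const[of ?C]] by fastforce
  then show "((\<lambda>s. LINT t:{0..}|lborel. a (s + t)) \<longlongrightarrow> ?C) (at_right 0)"
    by (rule Lim_transform_eventually[OF _ tail_eq])
      (use eventually_at_right_less[of "0::real"] in \<open>rule eventually_mono, simp\<close>)
  have "((\<lambda>b. LINT t:{0..b}|lborel. a t) \<longlongrightarrow> ?C) at_top"
    by (simp add: tendsto_set_lebesgue_integral_at_top[OF _ int])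
  moreover have "\<forall>\<^sub>F b in at_top. (LINT t:{0..b}|lborel. a t) = I b"
    using eventually_ge_at_top[of 0] by eventually_elim (simp add: I_def interval_integral_Icc zero_ereal_def)
  ultimately have "(I \<longlongrightarrow> ?C) at_top"
    by (rule Lim_transform_eventually)
  then have "((\<lambda>s. ?C - I s) \<longlongrightarrow> 0) at_top"
    using tendsto_diff[OF tendsto_const[of ?C]] by fastforce
  then show "((\<lambda>s. LINT t:{0..}|lborel. a (s + t)) \<longlongrightarrow> 0) at_top"
    by (rule Lim_transform_eventually[OF _ tail_eq]) (rule eventually_ge_at_top)
qed

lemma set_integral_tail_power:
  fixes a :: "real \<Rightarrow> real"
  assumes cont: "continuous_on {0..} a" and nonneg: "\<And>t. 0 \<le> t \<Longrightarrow> 0 \<le> a t"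
    and int: "set_integrable lborel {0..} a"
  defines "G \<equiv> \<lambda>s. LINT t:{0..}|lborel. a (s + t)"
  shows "set_integrable lborel {0..} (\<lambda>s. a s * G s ^ m)"
    and "(LINT s:{0..}|lborel. a s * G s ^ m) = G 0 ^ Suc m / Suc m"
proof -
  \<comment> \<open>\<open>G' = - a\<close>, so \<open>a G\<^sup>m\<close> is the derivative of \<open>F\<close>\<close>
  define F where "F = (\<lambda>s. - (G s ^ Suc m) / Suc m)"
  have G_deriv: "(G has_real_derivative - a x) (at x)" if "0 < x" for x
    unfolding G_def using cont int that by (rule has_real_derivative_tail_integral)
  have F_deriv: "(F has_real_derivative a x * G x ^ m) (at x)" if "0 < x" for x
  proof -
    from DERIV_power[OF G_deriv[OF that], of "Suc m"]
    have "(F has_real_derivative - (Suc m * (- a x * G x ^ m)) / Suc m) (at x)"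
      unfolding F_def by (intro DERIV_cdivide DERIV_minus) simp
    then show ?thesis
      by (simp del: of_nat_Suc)
  qed
  have isCont: "isCont (\<lambda>s. a s * G s ^ m) x" if "0 < x" for x
    using that continuous_on_interior[OF cont, of x] DERIV_isCont[OF G_deriv[OF that]]
    by (intro continuous_intros) auto
  have G_nonneg: "0 \<le> G s" if "0 \<le> s" for s
    unfolding G_def set_lebesgue_integral_def using that nonneg
    by (intro Bochner_Integration.integral_nonneg) (simp add: indicator_def)
  have "((F \<circ> real_of_ereal) \<longlongrightarrow> - (G 0 ^ Suc m) / Suc m) (at_right (ereal 0))"
    unfolding ereal_tendsto_simps F_def G_def
    using tendsto_tail_integral(1)[OF cont int] by (auto intro!: tendsto_eq_intros)
  moreover have "((F \<circ> real_of_ereal) \<longlongrightarrow> 0) (at_left \<infinity>)"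
    unfolding ereal_tendsto_simps F_def G_def
    using tendsto_tail_integral(2)[OF cont int] by (auto intro!: tendsto_eq_intros)
  moreover have "AE x in lborel. ereal 0 < ereal x \<longrightarrow> ereal x < \<infinity> \<longrightarrow> 0 \<le> a x * G x ^ m"
    using nonneg G_nonneg by (intro AE_I2) simp
  ultimately have "set_integrable lborel {0<..} (\<lambda>s. a s * G s ^ m)"
    and FTC: "(LINT s:{0<..}|lborel. a s * G s ^ m) = G 0 ^ Suc m / Suc m"
    using interval_integral_FTC_nonneg[where a="ereal 0" and b=\<infinity> and F=F and f="\<lambda>s. a s * G s ^ m"]
      F_deriv isCont by (simp_all add: interval_integral_Ioi)
  then show "set_integrable lborel {0..} (\<lambda>s. a s * G s ^ m)"
    by (subst set_integrable_discrete_difference[where X="{0}"]) auto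
  have "(LINT s:{0..}|lborel. a s * G s ^ m) = (LINT s:{0<..}|lborel. a s * G s ^ m)"
    by (rule set_integral_discrete_difference[where X="{0}"]) auto
  then show "(LINT s:{0..}|lborel. a s * G s ^ m) = G 0 ^ Suc m / Suc m"
    using FTC by simp
qed

lemma set_integrable_max_powr:
  fixes L \<gamma> :: real
  assumes "0 < L" "1 < \<gamma>"
  shows "set_integrable lborel {0..} (\<lambda>s. max s L powr - \<gamma>)"
proof -
  define F where "F = (\<lambda>x::real. x powr (1 - \<gamma>) / (1 - \<gamma>))"
  have "set_integrable lborel (einterval L \<infinity>) (\<lambda>s. s powr - \<gamma>)"
  proof (rule interval_integral_FTC_nonneg(1))
    show "((F \<circ> real_of_ereal) \<longlongrightarrow> F L) (at_right (ereal L))"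
      unfolding ereal_tendsto_simps F_def using assms by (auto intro!: tendsto_eq_intros)
    show "((F \<circ> real_of_ereal) \<longlongrightarrow> 0) (at_left \<infinity>)"
      unfolding ereal_tendsto_simps F_def using assms
      by (intro tendsto_divide_zero tendsto_neg_powr filterlim_ident) simp
  qed (use assms in \<open>auto simp: F_def intro!: derivative_eq_intros continuous_intros\<close>)
  then have "set_integrable lborel {L<..} (\<lambda>s. max s L powr - \<gamma>)"
    by (rule set_integrable_cong[THEN iffD1, rotated -1]) auto
  moreover have "set_integrable lborel {0..L} (\<lambda>s. max s L powr - \<gamma>)"
    using assms by (intro borel_integrable_atLeastAtMost' continuous_intros) auto
  moreover have "{0..} = {0..L} \<union> {L<..}"
    using assms by auto
  ultimately show ?thesis
    by (metis set_integrable_Un sets_lborel atLeastAtMost_borel greaterThan_borel)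
qed

section \<open>Holomorphic integrals along rays\<close>

lemma continuous_on_shift_of_real:
  fixes \<xi> :: complex
  assumes "continuous_on S f" "\<And>s. s \<in> T \<Longrightarrow> \<xi> + of_real s \<in> S"
  shows "continuous_on T (\<lambda>s. f (\<xi> + of_real s))"
  using assms(2) by (intro continuous_on_compose2[OF assms(1)] continuous_intros) auto

definition locally_ray_dominated :: "complex set \<Rightarrow> (complex \<Rightarrow> 'a::real_normed_vector) \<Rightarrow> bool" where
  "locally_ray_dominated S g \<longleftrightarrow>
     (\<forall>\<xi>0\<in>S. \<exists>r>0. \<exists>h. cball \<xi>0 r \<subseteq> S \<and> set_integrable lborel {0..} h \<and>
        (\<forall>\<zeta>\<in>cball \<xi>0 r. \<forall>s\<ge>0. norm (g (\<zeta> + of_real s)) \<le> h s))"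

lemma bounded_on_ray_segments:
  fixes f :: "complex \<Rightarrow> 'a::real_normed_vector"
  assumes "continuous_on S f" "compact K" "\<And>\<zeta> s. \<zeta> \<in> K \<Longrightarrow> s \<in> {0..L} \<Longrightarrow> \<zeta> + of_real s \<in> S"
  shows "\<exists>B. \<forall>\<zeta>\<in>K. \<forall>s\<in>{0..L}. norm (f (\<zeta> + of_real s)) \<le> B"
proof -
  have "compact ((\<lambda>(\<zeta>, s). \<zeta> + of_real s) ` (K \<times> {0..L}))"
    unfolding case_prod_unfold
    using assms(2) by (intro compact_continuous_image compact_Times compact_Icc continuous_intros)
  moreover have "(\<lambda>(\<zeta>, s). \<zeta> + of_real s) ` (K \<times> {0..L}) \<subseteq> S"
    using assms(3) by auto
  ultimately have "bounded (f ` (\<lambda>(\<zeta>, s). \<zeta> + of_real s) ` (K \<times> {0..L}))"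
    using assms(1) by (meson compact_continuous_image compact_imp_bounded continuous_on_subset)
  then show ?thesis
    unfolding bounded_iff by force
qed

lemma half_le_norm_add_of_real:
  fixes \<zeta> :: complex
  assumes "norm \<zeta> \<le> s / 2"
  shows "s / 2 \<le> norm (\<zeta> + of_real s)"
  using norm_triangle_ineq2[of "of_real s" "- \<zeta>"] assms by (simp add: algebra_simps)

lemma norm_add_of_real_powr_le:
  fixes \<zeta> :: complex
  assumes "norm \<zeta> \<le> s / 2" "0 < s" "0 \<le> \<gamma>"
  shows "norm (\<zeta> + of_real s) powr - \<gamma> \<le> 2 powr \<gamma> * s powr - \<gamma>"
proof -
  have "norm (\<zeta> + of_real s) powr - \<gamma> \<le> (s / 2) powr - \<gamma>"
    using half_le_norm_add_of_real[OF assms(1)] assms(2,3) by (intro powr_mono2') auto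
  also have "\<dots> = 2 powr \<gamma> * s powr - \<gamma>"
    using assms(2) by (simp add: powr_divide powr_minus divide_simps)
  finally show ?thesis .
qed

lemma locally_ray_dominated_if_decay:
  fixes f :: "complex \<Rightarrow> 'a::real_normed_vector"
  assumes "open S" and shift: "\<And>\<xi> s. \<xi> \<in> S \<Longrightarrow> 0 \<le> s \<Longrightarrow> \<xi> + of_real s \<in> S"
    and cont: "continuous_on S f" and "1 < \<gamma>"
    and decay: "\<And>\<xi>. \<xi> \<in> S \<Longrightarrow> R \<le> norm \<xi> \<Longrightarrow> norm (f \<xi>) \<le> k * norm \<xi> powr - \<gamma>"
  shows "locally_ray_dominated S f"
  unfolding locally_ray_dominated_def
proof
  fix \<xi>0 assume "\<xi>0 \<in> S"
  then obtain r where r: "0 < r" "cball \<xi>0 r \<subseteq> S"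
    using \<open>open S\<close> open_contains_cball by blast
  define L where "L = 2 * (norm \<xi>0 + r) + 2 * \<bar>R\<bar> + 1"
  have "0 < L"
    unfolding L_def using r(1) norm_ge_zero[of \<xi>0] abs_ge_zero[of R] by argo
  have "\<zeta> + of_real s \<in> S" if "\<zeta> \<in> cball \<xi>0 r" "s \<in> {0..L}" for \<zeta> s
    using that r shift by auto
  then obtain B where B: "\<forall>\<zeta>\<in>cball \<xi>0 r. \<forall>s\<in>{0..L}. norm (f (\<zeta> + of_real s)) \<le> B"
    using bounded_on_ray_segments[OF cont compact_cball] by blast
  \<comment> \<open>\<open>B\<close> covers \<open>s \<le> L\<close>; for \<open>s > L\<close>, \<open>R \<le> s / 2 \<le> norm (\<zeta> + s)\<close> and the decay bound applies\<close>
  define C where "C = max (B * L powr \<gamma>) (\<bar>k\<bar> * 2 powr \<gamma>)"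
  have "norm (f (\<zeta> + of_real s)) \<le> C * max s L powr - \<gamma>" if \<zeta>: "\<zeta> \<in> cball \<xi>0 r" and "0 \<le> s" for \<zeta> s
  proof (cases "s \<le> L")
    case True
    then have "norm (f (\<zeta> + of_real s)) \<le> B * L powr \<gamma> * L powr - \<gamma>"
      using B \<zeta> \<open>0 \<le> s\<close> \<open>0 < L\<close> by (simp add: mult.assoc flip: powr_add)
    also have "\<dots> \<le> C * max s L powr - \<gamma>"
      using True by (simp add: C_def max_def mult_right_mono)
    finally show ?thesis .
  next
    case False
    have "norm \<zeta> \<le> norm \<xi>0 + r"
      using \<zeta> norm_triangle_ineq2[of \<zeta> \<xi>0] by (auto simp: dist_norm norm_minus_commute)
    then have near: "norm \<zeta> \<le> s / 2" and "R \<le> s / 2"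
      using False abs_ge_self[of R] norm_ge_zero[of \<xi>0] r(1) unfolding L_def by argo+
    then have "norm (f (\<zeta> + of_real s)) \<le> k * norm (\<zeta> + of_real s) powr - \<gamma>"
      using decay[OF shift[OF subsetD[OF r(2) \<zeta>] \<open>0 \<le> s\<close>]] half_le_norm_add_of_real[OF near] by simp
    also have "\<dots> \<le> \<bar>k\<bar> * (2 powr \<gamma> * s powr - \<gamma>)"
      using norm_add_of_real_powr_le[OF near] False \<open>0 < L\<close> assms(4)
      by (intro mult_mono) auto
    also have "\<dots> \<le> C * max s L powr - \<gamma>"
      using False by (simp add: C_def max_def mult_right_mono flip: mult.assoc)
    finally show ?thesis .
  qed
  moreover have "set_integrable lborel {0..} (\<lambda>s. C * max s L powr - \<gamma>)"
    using set_integrable_max_powr[OF \<open>0 < L\<close> assms(4)] by (rule set_integrable_mult_right)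
  ultimately show "\<exists>r>0. \<exists>h. cball \<xi>0 r \<subseteq> S \<and> set_integrable lborel {0..} h \<and>
      (\<forall>\<zeta>\<in>cball \<xi>0 r. \<forall>s\<ge>0. norm (f (\<zeta> + of_real s)) \<le> h s)"
    using r by blast
qed

lemma holomorphic_on_set_integral_Icc:
  fixes g :: "complex \<Rightarrow> complex" and e :: "real \<Rightarrow> complex"
  assumes "open S" "g holomorphic_on S" "continuous_on {0..b} e" "convex U"
    and into_S: "\<And>\<zeta> s. \<zeta> \<in> U \<Longrightarrow> s \<in> {0..b} \<Longrightarrow> \<zeta> + of_real s \<in> S"
  shows "(\<lambda>\<zeta>. LINT s:{0..b}|lborel. g (\<zeta> + of_real s) * e s) holomorphic_on U"
proof -
  have cont: "continuous_on {0..b} (\<lambda>s. g (\<zeta> + of_real s) * e s)" if "\<zeta> \<in> U" for \<zeta>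
    using continuous_on_shift_of_real[OF holomorphic_on_imp_continuous_on[OF assms(2)] into_S[OF that]]
      assms(3) by (intro continuous_intros)
  have "(\<lambda>\<zeta>. integral (cbox 0 b) (\<lambda>s. g (\<zeta> + of_real s) * e s)) holomorphic_on U"
  proof (rule leibniz_rule_holomorphic[where fx="\<lambda>\<zeta> s. deriv g (\<zeta> + of_real s) * e s"])
    fix \<zeta> s assume "\<zeta> \<in> U" "s \<in> cbox 0 b"
    then have "(g has_field_derivative deriv g (\<zeta> + of_real s)) (at (\<zeta> + of_real s))"
      using into_S assms(1,2) by (intro holomorphic_derivI) auto
    then have "((\<lambda>\<zeta>. g (\<zeta> + of_real s)) has_field_derivative deriv g (\<zeta> + of_real s)) (at \<zeta>)"
      by (simp add: DERIV_shift)
    then show "((\<lambda>\<zeta>. g (\<zeta> + of_real s) * e s) has_field_derivative deriv g (\<zeta> + of_real s) * e s)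
        (at \<zeta> within U)"
      by (rule has_field_derivative_at_within[OF DERIV_cmult_right])
  next
    show "(\<lambda>s. g (\<zeta> + of_real s) * e s) integrable_on cbox 0 b" if "\<zeta> \<in> U" for \<zeta>
      using cont[OF that] by (simp add: integrable_continuous_real)
  next
    have "continuous_on (U \<times> {0..b}) (\<lambda>p. deriv g (fst p + of_real (snd p)))"
      using into_S
      by (intro continuous_on_compose2[OF holomorphic_on_imp_continuous_on[OF holomorphic_deriv[OF assms(2,1)]]]
          continuous_intros) auto
    moreover have "continuous_on (U \<times> {0..b}) (\<lambda>p. e (snd p))"
      by (intro continuous_on_compose2[OF assms(3)] continuous_intros) auto
    ultimately show "continuous_on (U \<times> cbox 0 b) (\<lambda>(\<zeta>, s). deriv g (\<zeta> + of_real s) * e s)"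
      unfolding case_prod_unfold cbox_interval by (rule continuous_on_mult)
  qed fact
  then show ?thesis
  proof (rule holomorphic_transform)
    fix \<zeta> assume "\<zeta> \<in> U"
    show "integral (cbox 0 b) (\<lambda>s. g (\<zeta> + of_real s) * e s) = (LINT s:{0..b}|lborel. g (\<zeta> + of_real s) * e s)"
      using set_borel_integral_eq_integral(2)[OF borel_integrable_atLeastAtMost'[OF cont[OF \<open>\<zeta> \<in> U\<close>]]]
      by simp
  qed
qed

lemma uniform_limit_truncated_ray_integral:
  fixes g :: "complex \<Rightarrow> complex" and e :: "real \<Rightarrow> complex"
  assumes h: "set_integrable lborel {0..} h"
    and cont: "\<And>\<zeta>. \<zeta> \<in> K \<Longrightarrow> continuous_on {0..} (\<lambda>s. g (\<zeta> + of_real s))"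
    and e: "continuous_on {0..} e" "\<And>s. 0 \<le> s \<Longrightarrow> norm (e s) \<le> 1"
    and dom: "\<And>\<zeta> s. \<zeta> \<in> K \<Longrightarrow> 0 \<le> s \<Longrightarrow> norm (g (\<zeta> + of_real s)) \<le> h s"
  shows "uniform_limit K (\<lambda>b \<zeta>. LINT s:{0..b}|lborel. g (\<zeta> + of_real s) * e s)
           (\<lambda>\<zeta>. LINT s:{0..}|lborel. g (\<zeta> + of_real s) * e s) at_top"
proof (rule uniform_limit_set_lebesgue_integral_at_top[OF _ h])
  show "norm (g (\<zeta> + of_real s) * e s) \<le> h s" if "\<zeta> \<in> K" "0 \<le> s" for \<zeta> s
    using dom[OF that] mult_left_le[OF e(2)[OF that(2)] norm_ge_zero[of "g (\<zeta> + of_real s)"]]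
    by (simp add: norm_mult)
  show "set_borel_measurable lborel {0..} (\<lambda>s. g (\<zeta> + of_real s) * e s)" if "\<zeta> \<in> K" for \<zeta>
    unfolding set_borel_measurable_def measurable_lborel2
    using cont[OF that] e(1) by (intro borel_measurable_continuous_on_indicator continuous_intros) auto
qed simp

lemma holomorphic_on_ray_integral:
  fixes g :: "complex \<Rightarrow> complex" and e :: "real \<Rightarrow> complex"
  assumes "open S" and shift: "\<And>\<xi> s. \<xi> \<in> S \<Longrightarrow> 0 \<le> s \<Longrightarrow> \<xi> + of_real s \<in> S"
    and "g holomorphic_on S" "locally_ray_dominated S g"
    and e: "continuous_on {0..} e" "\<And>s. 0 \<le> s \<Longrightarrow> norm (e s) \<le> 1"
  shows "(\<lambda>\<xi>. LINT s:{0..}|lborel. g (\<xi> + of_real s) * e s) holomorphic_on S"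
proof -
  let ?F = "\<lambda>b \<zeta>. LINT s:{0..b}|lborel. g (\<zeta> + of_real s) * e s"
  let ?G = "\<lambda>\<xi>. LINT s:{0..}|lborel. g (\<xi> + of_real s) * e s"
  have "?G field_differentiable (at \<xi>0)" if "\<xi>0 \<in> S" for \<xi>0
  proof -
    obtain r h where r: "0 < r" "cball \<xi>0 r \<subseteq> S" and h: "set_integrable lborel {0..} h"
      and dom: "\<forall>\<zeta>\<in>cball \<xi>0 r. \<forall>s\<ge>0. norm (g (\<zeta> + of_real s)) \<le> h s"
      using assms(4) \<open>\<xi>0 \<in> S\<close> unfolding locally_ray_dominated_def by blast
    have lim: "uniform_limit (cball \<xi>0 r) ?F ?G at_top"
    proof (rule uniform_limit_truncated_ray_integral[OF h _ e])
      show "continuous_on {0..} (\<lambda>s. g (\<zeta> + of_real s))" if "\<zeta> \<in> cball \<xi>0 r" for \<zeta>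
        using holomorphic_on_imp_continuous_on[OF assms(3)] by (rule continuous_on_shift_of_real)
          (use that r shift in auto)
    qed (use dom in auto)
    have truncated: "\<forall>\<^sub>F b in at_top. continuous_on (cball \<xi>0 r) (?F b) \<and> ?F b holomorphic_on ball \<xi>0 r"
    proof (rule always_eventually, intro allI)
      fix b :: real
      have "?F b holomorphic_on cball \<xi>0 r"
        using r shift by (intro holomorphic_on_set_integral_Icc[OF assms(1,3)] continuous_on_subset[OF e(1)]) auto
      then show "continuous_on (cball \<xi>0 r) (?F b) \<and> ?F b holomorphic_on ball \<xi>0 r"
        using holomorphic_on_imp_continuous_on holomorphic_on_subset[OF _ ball_subset_cball] by blast
    qed
    have "?G holomorphic_on ball \<xi>0 r"
      using holomorphic_uniform_limit[OF truncated lim trivial_limit_at_top_linorder] by blast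
    then show ?thesis
      using r(1) holomorphic_on_imp_differentiable_at[OF _ open_ball] centre_in_ball by blast
  qed
  then show ?thesis
    unfolding holomorphic_on_def using field_differentiable_at_within by blast
qed

section \<open>The iteration\<close>

locale ray_dominated_kernel =
  fixes S :: "complex set" and Q :: "complex \<Rightarrow> complex"
  assumes open_S: "open S"
    and shift_in_S: "\<And>\<xi> s. \<xi> \<in> S \<Longrightarrow> 0 \<le> s \<Longrightarrow> \<xi> + of_real s \<in> S"
    and holomorphic_Q: "Q holomorphic_on S"
    and dominated_Q: "locally_ray_dominated S Q"
begin

definition ray_norm :: "complex \<Rightarrow> real" where
  "ray_norm \<xi> = (LINT s:{0..}|lborel. norm (Q (\<xi> + of_real s)))"

lemma continuous_on_Q_ray: "\<xi> \<in> S \<Longrightarrow> continuous_on {0..} (\<lambda>s. Q (\<xi> + of_real s))"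
  by (rule continuous_on_shift_of_real[OF holomorphic_on_imp_continuous_on[OF holomorphic_Q]])
    (simp add: shift_in_S)

lemma ray_norm_nonneg: "0 \<le> ray_norm \<xi>"
  unfolding ray_norm_def set_lebesgue_integral_def by (intro Bochner_Integration.integral_nonneg) simp

lemma ray_norm_integrable:
  assumes "\<xi> \<in> S"
  shows "set_integrable lborel {0..} (\<lambda>s. norm (Q (\<xi> + of_real s)))"
proof -
  obtain r h where "0 < r" and h: "set_integrable lborel {0..} h"
    and dom: "\<forall>\<zeta>\<in>cball \<xi> r. \<forall>s\<ge>0. norm (Q (\<zeta> + of_real s)) \<le> h s"
    using dominated_Q assms unfolding locally_ray_dominated_def by blast
  show ?thesis
  proof (rule set_integral_continuous_bound(1)[OF h])
    show "continuous_on {0..} (\<lambda>s. norm (Q (\<xi> + of_real s)))"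
      by (rule continuous_on_norm[OF continuous_on_Q_ray[OF assms]])
    show "norm (norm (Q (\<xi> + of_real s))) \<le> h s" if "s \<in> {0..}" for s
      using dom \<open>0 < r\<close> that by simp
  qed simp
qed

lemma ray_norm_shift_le:
  assumes "\<xi> \<in> S" "0 \<le> s"
  shows "ray_norm (\<xi> + of_real s) \<le> ray_norm \<xi>"
proof -
  have "0 \<le> (LBINT t=0..s. norm (Q (\<xi> + of_real t)))"
    unfolding zero_ereal_def interval_integral_Icc[OF assms(2)] set_lebesgue_integral_def
    by (intro Bochner_Integration.integral_nonneg) simp
  then show ?thesis
    using set_integral_atLeast_shift_eq_diff[OF ray_norm_integrable[OF assms(1)] assms(2)]
    by (simp add: ray_norm_def add.assoc)
qed

lemma integral_ray_norm_power:
  assumes "\<xi> \<in> S"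
  shows "set_integrable lborel {0..} (\<lambda>s. norm (Q (\<xi> + of_real s)) * ray_norm (\<xi> + of_real s) ^ n)"
    and "(LINT s:{0..}|lborel. norm (Q (\<xi> + of_real s)) * ray_norm (\<xi> + of_real s) ^ n)
          = ray_norm \<xi> ^ Suc n / Suc n"
  using set_integral_tail_power[OF continuous_on_norm[OF continuous_on_Q_ray[OF assms]] _
      ray_norm_integrable[OF assms], of n]
  by (simp_all add: ray_norm_def add.assoc)

lemma locally_ray_dominated_mult:
  assumes bound: "\<And>\<zeta>. \<zeta> \<in> S \<Longrightarrow> norm (w \<zeta>) \<le> (2 * ray_norm \<zeta>) ^ n / fact n"
  shows "locally_ray_dominated S (\<lambda>\<zeta>. Q \<zeta> * w \<zeta>)"
  unfolding locally_ray_dominated_def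
proof
  fix \<xi>0 assume "\<xi>0 \<in> S"
  then obtain r h where r: "0 < r" "cball \<xi>0 r \<subseteq> S" and h: "set_integrable lborel {0..} h"
    and dom: "\<forall>\<zeta>\<in>cball \<xi>0 r. \<forall>s\<ge>0. norm (Q (\<zeta> + of_real s)) \<le> h s"
    using dominated_Q unfolding locally_ray_dominated_def by blast
  define M where "M = (2 * (LINT s:{0..}|lborel. h s)) ^ n / fact n"
  have "norm (Q (\<zeta> + of_real s) * w (\<zeta> + of_real s)) \<le> h s * M"
    if "\<zeta> \<in> cball \<xi>0 r" "0 \<le> s" for \<zeta> s
  proof -
    have "\<zeta> \<in> S"
      using that r by auto
    have "ray_norm (\<zeta> + of_real s) \<le> ray_norm \<zeta>"
      by (rule ray_norm_shift_le[OF \<open>\<zeta> \<in> S\<close> that(2)])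
    also have "\<dots> \<le> (LINT s:{0..}|lborel. h s)"
      unfolding ray_norm_def using dom that(1)
      by (intro set_integral_mono[OF ray_norm_integrable[OF \<open>\<zeta> \<in> S\<close>] h]) auto
    finally have "norm (w (\<zeta> + of_real s)) \<le> M"
      using bound[OF shift_in_S[OF \<open>\<zeta> \<in> S\<close> that(2)]] ray_norm_nonneg unfolding M_def
      by (meson divide_right_mono fact_ge_zero mult_left_mono order_trans power_mono zero_le_numeral
          mult_nonneg_nonneg)
    moreover have "norm (Q (\<zeta> + of_real s)) \<le> h s"
      using dom that by simp
    ultimately show ?thesis
      unfolding norm_mult by (intro mult_mono) (auto intro: order_trans[OF norm_ge_zero])
  qed
  moreover have "set_integrable lborel {0..} (\<lambda>s. h s * M)"
    using h by (simp add: mult.commute[of _ M])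
  ultimately show "\<exists>r>0. \<exists>h. cball \<xi>0 r \<subseteq> S \<and> set_integrable lborel {0..} h \<and>
      (\<forall>\<zeta>\<in>cball \<xi>0 r. \<forall>s\<ge>0. norm (Q (\<zeta> + of_real s) * w (\<zeta> + of_real s)) \<le> h s)"
    using r by blast
qed

lemma holomorphic_on_iteration:
  assumes "w holomorphic_on S" "\<And>\<zeta>. \<zeta> \<in> S \<Longrightarrow> norm (w \<zeta>) \<le> (2 * ray_norm \<zeta>) ^ n / fact n"
    and "continuous_on {0..} e" "\<And>s. 0 \<le> s \<Longrightarrow> norm (e s) \<le> 1"
  shows "(\<lambda>\<xi>. LINT s:{0..}|lborel. Q (\<xi> + of_real s) * (e s * w (\<xi> + of_real s))) holomorphic_on S"
proof -
  have hol: "(\<lambda>\<zeta>. Q \<zeta> * w \<zeta>) holomorphic_on S"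
    using holomorphic_Q assms(1) by (rule holomorphic_on_mult)
  have dom: "locally_ray_dominated S (\<lambda>\<zeta>. Q \<zeta> * w \<zeta>)"
    using assms(2) by (rule locally_ray_dominated_mult)
  have "(\<lambda>\<xi>. LINT s:{0..}|lborel. Q (\<xi> + of_real s) * w (\<xi> + of_real s) * e s) holomorphic_on S"
    by (rule holomorphic_on_ray_integral[OF open_S _ hol dom assms(3,4)]) (rule shift_in_S)
  then show ?thesis
    by (simp add: ac_simps)
qed

lemma norm_iteration_le:
  assumes "continuous_on S w" "\<And>\<zeta>. \<zeta> \<in> S \<Longrightarrow> norm (w \<zeta>) \<le> (2 * ray_norm \<zeta>) ^ n / fact n"
    and "continuous_on {0..} e" "\<And>s. 0 \<le> s \<Longrightarrow> norm (e s) \<le> 1" and "\<xi> \<in> S"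
  shows "norm (LINT s:{0..}|lborel. Q (\<xi> + of_real s) * (e s * w (\<xi> + of_real s)))
           \<le> 2 ^ n * ray_norm \<xi> ^ Suc n / fact (Suc n)"
proof -
  define B where "B s = 2 ^ n / fact n * (norm (Q (\<xi> + of_real s)) * ray_norm (\<xi> + of_real s) ^ n)" for s
  have "norm (LINT s:{0..}|lborel. Q (\<xi> + of_real s) * (e s * w (\<xi> + of_real s))) \<le> (LINT s:{0..}|lborel. B s)"
  proof (rule set_integral_continuous_bound(2))
    show "set_integrable lborel {0..} B"
      unfolding B_def using integral_ray_norm_power(1)[OF assms(5)] by (rule set_integrable_mult_right)
    have "continuous_on {0..} (\<lambda>s. w (\<xi> + of_real s))"
      by (rule continuous_on_shift_of_real[OF assms(1)]) (simp add: shift_in_S assms(5))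
    then show "continuous_on {0..} (\<lambda>s. Q (\<xi> + of_real s) * (e s * w (\<xi> + of_real s)))"
      using continuous_on_Q_ray[OF assms(5)] assms(3) by (intro continuous_intros)
    show "norm (Q (\<xi> + of_real s) * (e s * w (\<xi> + of_real s))) \<le> B s" if "s \<in> {0..}" for s
    proof -
      have "norm (e s * w (\<xi> + of_real s)) \<le> (2 * ray_norm (\<xi> + of_real s)) ^ n / fact n"
        using assms(2)[OF shift_in_S[OF assms(5)]] assms(4) that
        by (auto simp: norm_mult intro: order_trans[OF mult_left_le_one_le])
      then have "norm (Q (\<xi> + of_real s) * (e s * w (\<xi> + of_real s)))
          \<le> norm (Q (\<xi> + of_real s)) * ((2 * ray_norm (\<xi> + of_real s)) ^ n / fact n)"
        unfolding norm_mult[of "Q _"] by (rule mult_left_mono) simp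
      then show ?thesis
        by (simp add: B_def power_mult_distrib ac_simps)
    qed
  qed simp
  also have "\<dots> = 2 ^ n * ray_norm \<xi> ^ Suc n / fact (Suc n)"
    unfolding B_def set_integral_mult_right integral_ray_norm_power(2)[OF assms(5)]
    by (simp add: field_simps)
  finally show ?thesis .
qed

end

lemma W_Suc_components:
  "fst (W q z (Suc n) \<xi>) = (LINT s:{0..}|lborel. Qf q z (\<xi> + of_real s) *
      (fst (W q z n (\<xi> + of_real s)) + snd (W q z n (\<xi> + of_real s))))"
  "snd (W q z (Suc n) \<xi>) = (LINT s:{0..}|lborel. Qf q z (\<xi> + of_real s) *
      (- exp (2 * \<i> * of_real s * z) * (fst (W q z n (\<xi> + of_real s)) + snd (W q z n (\<xi> + of_real s)))))"
  by (simp_all add: Kmul_def distrib_left)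

lemma W_norm_le_and_holomorphic:
  assumes "ray_dominated_kernel S (Qf q z)" "0 < Im z"
  shows "(\<forall>\<xi>\<in>S. norm (fst (W q z n \<xi>)) + norm (snd (W q z n \<xi>))
            \<le> (2 * (LINT s:{0..}|lborel. norm (Qf q z (\<xi> + of_real s)))) ^ n / fact n)
         \<and> (\<lambda>\<xi>. fst (W q z n \<xi>)) holomorphic_on S \<and> (\<lambda>\<xi>. snd (W q z n \<xi>)) holomorphic_on S"
proof -
  interpret ray_dominated_kernel S "Qf q z"
    by (rule assms(1))
  define E where "E s = - exp (2 * \<i> * of_real s * z)" for s :: real
  have E: "continuous_on {0..} E" "\<And>s. 0 \<le> s \<Longrightarrow> norm (E s) \<le> 1"
    unfolding E_def using assms(2) by (auto simp: norm_exp_eq_Re intro!: continuous_intros)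
  show ?thesis
    unfolding ray_norm_def[symmetric]
  proof (induction n)
    case 0
    show ?case by simp
  next
    case (Suc n)
    define w where "w \<zeta> = fst (W q z n \<zeta>) + snd (W q z n \<zeta>)" for \<zeta>
    have hol: "w holomorphic_on S"
      using Suc.IH unfolding w_def by (intro holomorphic_intros) auto
    have bound: "norm (w \<zeta>) \<le> (2 * ray_norm \<zeta>) ^ n / fact n" if "\<zeta> \<in> S" for \<zeta>
      using Suc.IH that norm_triangle_ineq[of "fst (W q z n \<zeta>)"] unfolding w_def by (blast intro: order_trans)
    note W_Suc = W_Suc_components[of q z n, folded w_def E_def]
    have "norm (fst (W q z (Suc n) \<xi>)) + norm (snd (W q z (Suc n) \<xi>)) \<le> (2 * ray_norm \<xi>) ^ Suc n / fact (Suc n)"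
      if "\<xi> \<in> S" for \<xi>
    proof -
      let ?X = "2 ^ n * ray_norm \<xi> ^ Suc n / fact (Suc n)"
      have "norm (LINT s:{0..}|lborel. Qf q z (\<xi> + of_real s) * w (\<xi> + of_real s))
          + norm (LINT s:{0..}|lborel. Qf q z (\<xi> + of_real s) * (E s * w (\<xi> + of_real s))) \<le> ?X + ?X"
        using norm_iteration_le[OF holomorphic_on_imp_continuous_on[OF hol] bound _ _ that, of "\<lambda>_. 1"]
          norm_iteration_le[OF holomorphic_on_imp_continuous_on[OF hol] bound E that]
        by (intro add_mono) simp_all
      also have "?X + ?X = (2 * ray_norm \<xi>) ^ Suc n / fact (Suc n)"
        by (simp add: power_mult_distrib field_simps)
      finally show ?thesis
        unfolding W_Suc .
    qed
    then show ?case
      using holomorphic_on_iteration[OF hol bound, of "\<lambda>_. 1"] holomorphic_on_iteration[OF hol bound E]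
      unfolding W_Suc by simp
  qed
qed

lemma ray_dominated_kernel_sector:
  assumes "\<theta>0 \<le> pi" "q holomorphic_on sector \<theta>0" "1 < \<gamma>" "z \<noteq> 0"
    and decay: "\<forall>\<xi>\<in>sector \<theta>0. R \<le> norm \<xi> \<longrightarrow> norm (q \<xi>) \<le> k * norm \<xi> powr - \<gamma>"
  shows "ray_dominated_kernel (sector \<theta>0) (Qf q z)"
proof
  show "open (sector \<theta>0)"
    using assms(1) by (rule open_sector)
  show shift: "\<xi> + of_real s \<in> sector \<theta>0" if "\<xi> \<in> sector \<theta>0" "0 \<le> s" for \<xi> s
    using assms(1) that by (rule sector_add_of_real)
  show hol: "Qf q z holomorphic_on sector \<theta>0"
    unfolding Qf_def using assms(2,4) by (intro holomorphic_intros)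
  have Q_decay: "norm (Qf q z \<xi>) \<le> k / (2 * norm z) * norm \<xi> powr - \<gamma>"
    if "\<xi> \<in> sector \<theta>0" "R \<le> norm \<xi>" for \<xi>
    using decay that assms(4) by (simp add: Qf_def norm_mult norm_divide divide_right_mono)
  show "locally_ray_dominated (sector \<theta>0) (Qf q z)"
    using \<open>open (sector \<theta>0)\<close> shift holomorphic_on_imp_continuous_on[OF hol] assms(3) Q_decay
    by (rule locally_ray_dominated_if_decay)
qed

theorem lemma2p2:
  fixes q :: "complex \<Rightarrow> complex" and \<theta>0 \<gamma> k :: real
  assumes "0 < \<theta>0" and "\<theta>0 < pi"
    and "\<forall>x::real. x \<ge> 0 \<longrightarrow> q (of_real x) \<in> \<real>"
    and "q holomorphic_on sector \<theta>0"
    and "\<gamma> > 1"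
    and "\<exists>R. \<forall>\<xi>\<in>sector \<theta>0. norm \<xi> \<ge> R \<longrightarrow> norm (q \<xi>) \<le> k * norm \<xi> powr (- \<gamma>)"
  shows "\<forall>z. Im z > 0 \<longrightarrow> (\<forall>n. 
           (\<forall>\<xi>\<in>sector \<theta>0.
              norm (fst (W q z n \<xi>)) + norm (snd (W q z n \<xi>))
                \<le> (2 * (LINT s:{0..}|lborel. norm (Qf q z (\<xi> + of_real s)))) ^ n / fact n)
           \<and> (\<lambda>\<xi>. fst (W q z n \<xi>)) holomorphic_on sector \<theta>0
           \<and> (\<lambda>\<xi>. snd (W q z n \<xi>)) holomorphic_on sector \<theta>0)"
proof -
  obtain R where "\<forall>\<xi>\<in>sector \<theta>0. R \<le> norm \<xi> \<longrightarrow> norm (q \<xi>) \<le> k * norm \<xi> powr - \<gamma>"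
    using assms(6) by blast
  then have "ray_dominated_kernel (sector \<theta>0) (Qf q z)" if "0 < Im z" for z
    using assms(2,4,5) that by (intro ray_dominated_kernel_sector) auto
  then show ?thesis
    using W_norm_le_and_holomorphic by blast
qed

end
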